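(* Let $G=(V,E)$ be a simple graph with at least two pendent vertices. Let $u\in V$ with $d_G(u)\ge 3$, let $T$ be a hanging tree of $G$ connected to $u$ (with $|V(T)|\ge 1$), and let $v$ be a pendent vertex of $G$ with $v\notin V(T)$. Let $G'$ be the graph obtained from $G$ by the branch-transformation from $u$ to $v$. Then $\mathrm{irr}_t(G) > \mathrm{irr}_t(G')$.
   Context: For a simple graph $G=(V,E)$ and $w\in V$, $d_G(w)$ denotes the degree of $w$. The total irregularity is $\mathrm{irr}_t(G)=\frac12\sum_{x,y\in V}|d_G(x)-d_G(y)|$, where the sum runs over all ordered pairs $(x,y)\in V\times V$. A pendent vertex is a vertex of degree $1$. An induced subtree $T$ of $G$ is a hanging tree of $G$ connected to a vertex $u\notin V(T)$ if $G$ is obtained from the disjoint union of $T$ and $G-V(T)$ by adding exactly one edge $wu$ with $w\in V(T)$ and $u\in V(G)\setminus V(T)$. Branch-transformation from $u$ to $v$: given $u$, $T$ and $v$ as in the claim, where $wu$ is the unique edge joining $T$ to $G-V(T)$, let $G'$ be the graph obtained from $G$ by deleting the edge $wu$ and adding the edge $wv$. That is, $T$ is detached from $u$ and attached to $v$. *)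

theory Defs
  imports Complex_Main
begin

definition simple_graph :: "'a set \<Rightarrow> 'a set set \<Rightarrow> bool" where
  "simple_graph V E \<longleftrightarrow> finite V \<and> (\<forall>e\<in>E. e \<subseteq> V \<and> card e = 2)"

definition degree :: "'a set set \<Rightarrow> 'a \<Rightarrow> nat" where
  "degree E w = card {e \<in> E. w \<in> e}"

definition pendent :: "'a set set \<Rightarrow> 'a \<Rightarrow> bool" where
  "pendent E w \<longleftrightarrow> degree E w = 1"

definition irr_t :: "'a set \<Rightarrow> 'a set set \<Rightarrow> real" where
  "irr_t V E = (1/2) * (\<Sum>x\<in>V. \<Sum>y\<in>V. \<bar>real (degree E x) - real (degree E y)\<bar>)"

definition induced_edges :: "'a set set \<Rightarrow> 'a set \<Rightarrow> 'a set set" where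
  "induced_edges E S = {e \<in> E. e \<subseteq> S}"

definition connected_on :: "'a set \<Rightarrow> 'a set set \<Rightarrow> bool" where
  "connected_on S F \<longleftrightarrow>
     (\<forall>x\<in>S. \<forall>y\<in>S. (x, y) \<in> {(a, b). a \<in> S \<and> b \<in> S \<and> {a, b} \<in> F}\<^sup>*)"

definition is_cycle :: "'a set set \<Rightarrow> 'a list \<Rightarrow> bool" where
  "is_cycle F xs \<longleftrightarrow> length xs \<ge> 3 \<and> distinct xs \<and>
     (\<forall>i < length xs. {xs ! i, xs ! ((i + 1) mod length xs)} \<in> F)"

definition induced_tree :: "'a set set \<Rightarrow> 'a set \<Rightarrow> bool" where
  "induced_tree E S \<longleftrightarrow> S \<noteq> {} \<and> connected_on S (induced_edges E S) \<and>
     \<not> (\<exists>xs. is_cycle (induced_edges E S) xs)"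

definition hanging_tree :: "'a set \<Rightarrow> 'a set set \<Rightarrow> 'a set \<Rightarrow> 'a \<Rightarrow> 'a \<Rightarrow> bool" where
  "hanging_tree V E T w u \<longleftrightarrow> T \<subseteq> V \<and> u \<in> V - T \<and> w \<in> T \<and> induced_tree E T \<and>
     E = induced_edges E T \<union> induced_edges E (V - T) \<union> {{w, u}}"

definition branch_transform :: "'a set set \<Rightarrow> 'a \<Rightarrow> 'a \<Rightarrow> 'a \<Rightarrow> 'a set set" where
  "branch_transform E w u v = (E - {{w, u}}) \<union> {{w, v}}"

end

theory Submission
  imports Defs
begin

(* Since v is pendent
   and not in T, wv is not an edge of G, so only the degrees of u and v change:
   d(u) drops from d >= 3 to d - 1 and d(v) rises from 1 to 2 (the degree of w is
   unchanged, as it loses one edge and gains one).  Thus the two values d(v) <= d(u) are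
   replaced by values lying strictly inside the interval [d(v), d(u)] with the same sum.
   For any third vertex y, the sum |d(u) - d(y)| + |d(v) - d(y)| cannot grow when the pair
   of values moves symmetrically inward, and the difference |d(u) - d(v)| itself strictly shrinks; hence the total
   irregularity strictly decreases. *)

lemma abs_dist_sum_shrink:
  fixes a b c d t :: real
  assumes "a \<le> c" "c \<le> d" "c + d = a + b"
  shows "\<bar>c - t\<bar> + \<bar>d - t\<bar> \<le> \<bar>a - t\<bar> + \<bar>b - t\<bar>"
  using assms by (simp add: abs_if)

lemma double_sum_abs_split:
  fixes h :: "'a \<Rightarrow> real"
  assumes fin: "finite V" and uV: "u \<in> V" and vV: "v \<in> V" and uv: "u \<noteq> v"
  defines "R \<equiv> V - {u, v}"
  shows "(\<Sum>x\<in>V. \<Sum>y\<in>V. \<bar>h x - h y\<bar>) =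
     2 * \<bar>h u - h v\<bar> + 2 * (\<Sum>y\<in>R. \<bar>h u - h y\<bar> + \<bar>h v - h y\<bar>)
     + (\<Sum>x\<in>R. \<Sum>y\<in>R. \<bar>h x - h y\<bar>)"
proof -
  have V: "V = insert u (insert v R)" using uV vV R_def by auto
  have finR: "finite R" and uR: "u \<notin> R" and vR: "v \<notin> R" using fin R_def by auto
  have "(\<Sum>x\<in>V. \<Sum>y\<in>V. \<bar>h x - h y\<bar>) =
      (\<bar>h u - h v\<bar> + (\<Sum>y\<in>R. \<bar>h u - h y\<bar>)) + (\<bar>h v - h u\<bar> + (\<Sum>y\<in>R. \<bar>h v - h y\<bar>))
      + (\<Sum>x\<in>R. \<bar>h x - h u\<bar> + \<bar>h x - h v\<bar> + (\<Sum>y\<in>R. \<bar>h x - h y\<bar>))"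
    unfolding V using finR uR vR uv by (simp add: add.assoc)
  also have "(\<Sum>x\<in>R. \<bar>h x - h u\<bar> + \<bar>h x - h v\<bar> + (\<Sum>y\<in>R. \<bar>h x - h y\<bar>))
     = (\<Sum>y\<in>R. \<bar>h u - h y\<bar> + \<bar>h v - h y\<bar>) + (\<Sum>x\<in>R. \<Sum>y\<in>R. \<bar>h x - h y\<bar>)"
    by (simp add: sum.distrib abs_minus_commute)
  finally show ?thesis by (simp add: sum.distrib abs_minus_commute)
qed

lemma double_sum_abs_shrink_gap:
  fixes f g :: "'a \<Rightarrow> real"
  assumes fin: "finite V" and uV: "u \<in> V" and vV: "v \<in> V" and uv: "u \<noteq> v"
    and same: "\<And>x. x \<noteq> u \<Longrightarrow> x \<noteq> v \<Longrightarrow> g x = f x"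
    and inward: "f v < g v" "g v \<le> g u" and sum_kept: "g u + g v = f u + f v"
  shows "(\<Sum>x\<in>V. \<Sum>y\<in>V. \<bar>g x - g y\<bar>) < (\<Sum>x\<in>V. \<Sum>y\<in>V. \<bar>f x - f y\<bar>)"
proof -
  define R where "R = V - {u, v}"
  have same_R: "g x = f x" if "x \<in> R" for x using that same R_def by auto
  have rest: "(\<Sum>x\<in>R. \<Sum>y\<in>R. \<bar>g x - g y\<bar>) = (\<Sum>x\<in>R. \<Sum>y\<in>R. \<bar>f x - f y\<bar>)"
    by (intro sum.cong refl) (simp add: same_R)
  have cross: "(\<Sum>y\<in>R. \<bar>g u - g y\<bar> + \<bar>g v - g y\<bar>) \<le> (\<Sum>y\<in>R. \<bar>f u - f y\<bar> + \<bar>f v - f y\<bar>)"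
  proof (rule sum_mono)
    fix y assume "y \<in> R"
    then show "\<bar>g u - g y\<bar> + \<bar>g v - g y\<bar> \<le> \<bar>f u - f y\<bar> + \<bar>f v - f y\<bar>"
      using abs_dist_sum_shrink[OF less_imp_le[OF inward(1)] inward(2), of "f u" "f y"]
        sum_kept same_R by (simp add: add.commute)
  qed
  have pair: "\<bar>g u - g v\<bar> < \<bar>f u - f v\<bar>" using inward sum_kept by simp
  show ?thesis
    unfolding double_sum_abs_split[OF fin uV vV uv, of f] double_sum_abs_split[OF fin uV vV uv, of g]
      R_def[symmetric]
    using rest cross pair by (intro add_less_le_mono) simp_all
qed

lemma degree_exchange_edge:
  assumes fin: "finite E" and e: "e \<in> E" and e': "e' \<notin> E"
  shows "degree ((E - {e}) \<union> {e'}) x + of_bool (x \<in> e) = degree E x + of_bool (x \<in> e')"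
proof -
  let ?A = "{d \<in> E. x \<in> d}"
  have finA: "finite ?A" using fin by simp
  have inc: "{d \<in> (E - {e}) \<union> {e'}. x \<in> d} = (?A - {e}) \<union> (if x \<in> e' then {e'} else {})"
    by auto
  have "card (?A - {e}) + of_bool (x \<in> e) = card ?A"
  proof (cases "x \<in> e")
    case True
    then have "e \<in> ?A" using e by simp
    then show ?thesis using True finA card_Suc_Diff1[of ?A e] by simp
  qed simp
  moreover have "e' \<notin> ?A - {e}" using e' by simp
  ultimately show ?thesis
    unfolding degree_def inc using finA by (cases "x \<in> e'") auto
qed

lemma hanging_tree_root_nonadjacent:
  assumes "hanging_tree V E T w u" and "v \<notin> T" and "v \<noteq> u"
  shows "{w, v} \<notin> E"
proof
  assume wv: "{w, v} \<in> E"
  have T: "T \<subseteq> V" "w \<in> T"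
    and E: "E = induced_edges E T \<union> induced_edges E (V - T) \<union> {{w, u}}"
    using assms(1) unfolding hanging_tree_def by auto
  have "{w, v} \<notin> induced_edges E T" using assms(2) unfolding induced_edges_def by auto
  moreover have "{w, v} \<notin> induced_edges E (V - T)" using T unfolding induced_edges_def by auto
  moreover have "{w, v} \<noteq> {w, u}" using assms(3) by (auto simp: doubleton_eq_iff)
  ultimately show False using wv E by blast
qed

theorem lemma2:
  fixes V :: "'a set" and E :: "'a set set" and T :: "'a set" and u v w :: 'a
  assumes "simple_graph V E"
    and "card {x \<in> V. pendent E x} \<ge> 2"
    and "u \<in> V" and "degree E u \<ge> 3"
    and "hanging_tree V E T w u"
    and "v \<in> V" and "pendent E v" and "v \<notin> T"
  shows "irr_t V E > irr_t V (branch_transform E w u v)"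
proof -
  let ?E' = "branch_transform E w u v"
  have finV: "finite V" and finE: "finite E"
    using assms(1) finite_subset[of E "Pow V"] unfolding simple_graph_def by auto
  have dv: "degree E v = 1" using assms(7) unfolding pendent_def .
  have uv: "u \<noteq> v" and wu: "w \<noteq> u" and wv: "w \<noteq> v"
    using dv assms(4,5,8) unfolding hanging_tree_def by auto
  have wu_edge: "{w, u} \<in> E" using assms(5) unfolding hanging_tree_def by blast
  have deg: "real (degree ?E' x) + of_bool (x \<in> {w, u}) = real (degree E x) + of_bool (x \<in> {w, v})"
    for x
    using degree_exchange_edge[OF finE wu_edge hanging_tree_root_nonadjacent[OF assms(5,8) uv[symmetric]],
        of x, THEN arg_cong[where f = real]]
    unfolding branch_transform_def of_nat_add of_nat_of_bool .
  have "(\<Sum>x\<in>V. \<Sum>y\<in>V. \<bar>real (degree ?E' x) - real (degree ?E' y)\<bar>)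
     < (\<Sum>x\<in>V. \<Sum>y\<in>V. \<bar>real (degree E x) - real (degree E y)\<bar>)"
  proof (rule double_sum_abs_shrink_gap[OF finV assms(3,6) uv])
    show "real (degree ?E' x) = real (degree E x)" if "x \<noteq> u" "x \<noteq> v" for x
      using deg[of x] that by simp
    show "real (degree E v) < real (degree ?E' v)"
      and "real (degree ?E' v) \<le> real (degree ?E' u)"
      and "real (degree ?E' u) + real (degree ?E' v) = real (degree E u) + real (degree E v)"
      using deg[of u] deg[of v] uv wu wv dv assms(4) by auto
  qed
  then show ?thesis unfolding irr_t_def by simp
qed

end
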